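(* Each of the following posets has the Möbius uncertainty property: (i) the set $\mathbb{N}$ of positive integers ordered by divisibility; (ii) the set $\mathscr{F}(\mathbb{N})$ of finite subsets of $\mathbb{N}$ ordered by inclusion; (iii) the set $\mathscr{V}(\mathbb{F}_q^\infty)$ of finite-dimensional subspaces of $\mathbb{F}_q^\infty$ ordered by inclusion, for a finite field $\mathbb{F}_q$. Here a locally finite poset $P$ with minimum element has the Möbius uncertainty property if whenever $f,g:P\to\mathbb{C}$ are functions, neither identically zero, with $g(z)=\sum_{x\leqslant z} f(x)$ for all $z\in P$, at least one of $\operatorname{supp}(f)=\{x: f(x)\neq0\}$ and $\operatorname{supp}(g)=\{x: g(x)\neq 0\}$ is infinite.
   Context: $\mathbb{F}_q^\infty$ denotes the countably-infinite-dimensional vector space over $\mathbb{F}_q$ (finitely supported sequences over $\mathbb{F}_q$). All three posets are locally finite with a minimum element ($1$, $\emptyset$, $\{0\}$ respectively). *)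

theory Defs
  imports Complex_Main
begin

text \<open>Local finiteness / minimum element are properties of the concrete posets
  below; the sum over the (finite) down-set is the ordinary finite sum.\<close>

definition mobius_uncertainty :: "'a set \<Rightarrow> ('a \<Rightarrow> 'a \<Rightarrow> bool) \<Rightarrow> bool" where
  "mobius_uncertainty P le \<longleftrightarrow>
     (\<forall>f g :: 'a \<Rightarrow> complex.
        (\<exists>x\<in>P. f x \<noteq> 0) \<and> (\<exists>x\<in>P. g x \<noteq> 0) \<and>
        (\<forall>z\<in>P. g z = (\<Sum>x\<in>{x\<in>P. le x z}. f x))
        \<longrightarrow> infinite {x\<in>P. f x \<noteq> 0} \<or> infinite {x\<in>P. g x \<noteq> 0})"

text \<open>F_q^\<infinity>: finitely supported sequences over the field 'a.\<close>
definition finsupp_seqs :: "(nat \<Rightarrow> 'a::zero) set" where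
  "finsupp_seqs = {v. finite {i. v i \<noteq> 0}}"

definition seq_span :: "(nat \<Rightarrow> 'a::field) set \<Rightarrow> (nat \<Rightarrow> 'a) set" where
  "seq_span S = {x. \<exists>c. x = (\<lambda>i. \<Sum>v\<in>S. c v * v i)}"

definition fd_subspaces :: "(nat \<Rightarrow> 'a::field) set set" where
  "fd_subspaces = {V. \<exists>S. finite S \<and> S \<subseteq> finsupp_seqs \<and> V = seq_span S}"

end

(* If f has finite nonempty support F, it suffices to find m in F and infinitely many z
   with finite down-set whose down-set meets F exactly in m: for each of them g z = f m,
   which is nonzero.  Take m minimal in F and enlarge it by an ingredient invisible to every
   element of F: for divisibility z = m (k * prod F + 1), the second factor being coprime to
   all of F; for finite sets z = m plus one number beyond all elements of members of F; for
   subspaces z = m + span e_(N+k), where every vector of every member of F vanishes from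
   coordinate N on. *)

theory Submission
  imports Defs "HOL-Library.FuncSet" "HOL-Library.Infinite_Set"
begin

definition isolating_points :: "'a set \<Rightarrow> ('a \<Rightarrow> 'a \<Rightarrow> bool) \<Rightarrow> 'a set \<Rightarrow> 'a \<Rightarrow> 'a set" where
  "isolating_points P le F m = {z\<in>P. finite {x\<in>P. le x z} \<and> {x\<in>F. le x z} = {m}}"

lemma mobius_uncertaintyI:
  assumes "\<And>F. F \<subseteq> P \<Longrightarrow> finite F \<Longrightarrow> F \<noteq> {} \<Longrightarrow> \<exists>m\<in>F. infinite (isolating_points P le F m)"
  shows "mobius_uncertainty P le"
  unfolding mobius_uncertainty_def
proof (intro allI impI)
  fix f g :: "'a \<Rightarrow> complex"
  assume "(\<exists>x\<in>P. f x \<noteq> 0) \<and> (\<exists>x\<in>P. g x \<noteq> 0) \<and> (\<forall>z\<in>P. g z = (\<Sum>x\<in>{x\<in>P. le x z}. f x))"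
  then have supp_nonempty: "{x\<in>P. f x \<noteq> 0} \<noteq> {}"
    and g_eq: "\<And>z. z \<in> P \<Longrightarrow> g z = (\<Sum>x\<in>{x\<in>P. le x z}. f x)" by auto
  define F where "F = {x\<in>P. f x \<noteq> 0}"
  show "infinite F \<or> infinite {z\<in>P. g z \<noteq> 0}"
  proof (cases "finite F")
    case True
    have "F \<subseteq> P" "F \<noteq> {}" using supp_nonempty by (auto simp: F_def)
    then obtain m where "m \<in> F" and infinite_isolating: "infinite (isolating_points P le F m)"
      using assms[OF _ True] by blast
    have "isolating_points P le F m \<subseteq> {z\<in>P. g z \<noteq> 0}"
    proof
      fix z assume "z \<in> isolating_points P le F m"
      then have "z \<in> P" and "finite {x\<in>P. le x z}" and "{x\<in>F. le x z} = {m}"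
        unfolding isolating_points_def by auto
      then have "g z = (\<Sum>x\<in>{m}. f x)"
        unfolding g_eq[OF \<open>z \<in> P\<close>] by (intro sum.mono_neutral_right) (auto simp: F_def)
      with \<open>m \<in> F\<close> \<open>z \<in> P\<close> show "z \<in> {z\<in>P. g z \<noteq> 0}" by (simp add: F_def)
    qed
    then have "infinite {z\<in>P. g z \<noteq> 0}" using infinite_isolating by (rule infinite_super)
    then show ?thesis ..
  qed simp
qed

lemma infinite_isolating_pointsI:
  fixes h :: "nat \<Rightarrow> 'a"
  assumes "inj h" and "\<And>k. h k \<in> P" and "\<And>k. finite {x\<in>P. le x (h k)}"
    and "m \<in> F" and "\<And>k. le m (h k)"
    and "\<And>x k. x \<in> F \<Longrightarrow> le x (h k) \<Longrightarrow> le x m"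
    and "\<And>x. x \<in> F \<Longrightarrow> le x m \<Longrightarrow> x = m"
  shows "infinite (isolating_points P le F m)"
proof -
  have "h k \<in> isolating_points P le F m" for k
  proof -
    have "{x\<in>F. le x (h k)} = {m}" using assms(4-) by blast
    then show ?thesis using assms(2,3) by (simp add: isolating_points_def)
  qed
  then have "range h \<subseteq> isolating_points P le F m" by blast
  then show ?thesis using range_inj_infinite[OF \<open>inj h\<close>] by (rule infinite_super)
qed

lemma mobius_uncertainty_dvd: "mobius_uncertainty {n::nat. n > 0} (dvd)"
proof (rule mobius_uncertaintyI)
  fix F assume F: "F \<subseteq> {n::nat. n > 0}" "finite F" "F \<noteq> {}"
  define m where "m = Min F"
  have "m \<in> F" and "m > 0" using F by (auto simp: m_def)
  define M where "M = \<Prod>F"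
  have "M > 0" using F by (auto simp: M_def intro: prod_pos)
  define h where "h k = m * (k * M + 1)" for k
  have "infinite (isolating_points {n. n > 0} (dvd) F m)"
  proof (rule infinite_isolating_pointsI[where h = h])
    show "inj h" using \<open>m > 0\<close> \<open>M > 0\<close> by (auto simp: inj_def h_def)
    show "h k \<in> {n. n > 0}" for k using \<open>m > 0\<close> by (simp add: h_def)
    then have "{x\<in>{n. n > 0}. x dvd h k} \<subseteq> {..h k}" for k by (auto intro: dvd_imp_le)
    then show "finite {x\<in>{n. n > 0}. x dvd h k}" for k by (rule finite_subset) simp
    show "m \<in> F" "m dvd h k" for k by (simp_all add: \<open>m \<in> F\<close> h_def)
  next
    fix x k assume "x \<in> F" "x dvd h k"
    have "x dvd M" using \<open>x \<in> F\<close> F(2) unfolding M_def by auto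
    then have "coprime x (k * M + 1)"
      by (meson coprime_add_one_right coprime_divisors dvd_mult dvd_refl)
    then show "x dvd m" using \<open>x dvd h k\<close> by (metis coprime_dvd_mult_left_iff h_def)
  next
    fix x assume "x \<in> F" "x dvd m"
    then have "x \<le> m" using \<open>m > 0\<close> by (simp add: dvd_imp_le)
    moreover have "m \<le> x" using \<open>x \<in> F\<close> F(2) by (simp add: m_def)
    ultimately show "x = m" by simp
  qed
  with \<open>m \<in> F\<close> show "\<exists>m\<in>F. infinite (isolating_points {n. n > 0} (dvd) F m)" by blast
qed

lemma mobius_uncertainty_finite_subsets:
  "mobius_uncertainty {A :: nat set. finite A \<and> A \<subseteq> {0<..}} (\<subseteq>)"
proof (rule mobius_uncertaintyI)
  fix F assume F: "F \<subseteq> {A :: nat set. finite A \<and> A \<subseteq> {0<..}}" "finite F" "F \<noteq> {}"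
  obtain m where "m \<in> F" and m_minimal: "\<And>x. x \<in> F \<Longrightarrow> x \<subseteq> m \<Longrightarrow> m = x"
    using finite_has_minimal[OF F(2,3)] by blast
  have "finite m" "m \<subseteq> {0<..}" using \<open>m \<in> F\<close> F(1) by auto
  have "finite (\<Union>F)" using F(1,2) by (auto intro: finite_Union)
  then obtain B where B: "\<forall>n\<in>\<Union>F. n < B" unfolding finite_nat_set_iff_bounded by blast
  have fresh: "Suc (B + k) \<notin> x" if "x \<in> F" for x k
  proof
    assume "Suc (B + k) \<in> x"
    then have "Suc (B + k) \<in> \<Union>F" using that by blast
    then show False using B by fastforce
  qed
  define h where "h k = insert (Suc (B + k)) m" for k
  have "infinite (isolating_points {A. finite A \<and> A \<subseteq> {0<..}} (\<subseteq>) F m)"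
  proof (rule infinite_isolating_pointsI[where h = h])
    show "inj h"
    proof (rule injI)
      fix a b assume "h a = h b"
      have "Suc (B + a) \<in> h a" by (simp add: h_def)
      then have "Suc (B + a) \<in> h b" using \<open>h a = h b\<close> by simp
      then show "a = b" using fresh[OF \<open>m \<in> F\<close>, of a] by (simp add: h_def)
    qed
    show "h k \<in> {A. finite A \<and> A \<subseteq> {0<..}}" for k
      using \<open>finite m\<close> \<open>m \<subseteq> {0<..}\<close> by (simp add: h_def)
    have "{x\<in>{A. finite A \<and> A \<subseteq> {0<..}}. x \<subseteq> h k} \<subseteq> Pow (h k)" for k by blast
    then show "finite {x\<in>{A. finite A \<and> A \<subseteq> {0<..}}. x \<subseteq> h k}" for k
      by (rule finite_subset) (simp add: h_def \<open>finite m\<close>)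
    show "m \<in> F" by fact
    show "m \<subseteq> h k" for k by (auto simp: h_def)
    show "x \<subseteq> m" if "x \<in> F" "x \<subseteq> h k" for x k
      using that fresh by (auto simp: h_def)
    show "x = m" if "x \<in> F" "x \<subseteq> m" for x
      using that m_minimal by blast
  qed
  with \<open>m \<in> F\<close> show "\<exists>m\<in>F. infinite (isolating_points {A. finite A \<and> A \<subseteq> {0<..}} (\<subseteq>) F m)"
    by blast
qed

definition unit_seq :: "nat \<Rightarrow> nat \<Rightarrow> 'a::zero_neq_one" where
  "unit_seq n i = (if i = n then 1 else 0)"

lemma unit_seq_in_finsupp_seqs: "unit_seq n \<in> finsupp_seqs"
proof -
  have "{i. unit_seq n i \<noteq> (0::'a)} = {n}" by (auto simp: unit_seq_def)
  then show ?thesis unfolding finsupp_seqs_def by simp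
qed

lemma seq_span_vanishing:
  assumes "\<And>v. v \<in> S \<Longrightarrow> v j = 0" and "u \<in> seq_span S"
  shows "u j = 0"
  using assms unfolding seq_span_def by (auto intro: sum.neutral)

lemma seq_span_superset:
  assumes "finite S"
  shows "S \<subseteq> seq_span S"
proof
  fix v assume "v \<in> S"
  have "v = (\<lambda>i. \<Sum>w\<in>S. of_bool (w = v) * w i)"
    using assms \<open>v \<in> S\<close> by (simp add: if_distrib cong: if_cong)
  then have "\<exists>c. v = (\<lambda>i. \<Sum>w\<in>S. c w * w i)" by (rule exI[where x = "\<lambda>w. of_bool (w = v)"])
  then show "v \<in> seq_span S" by (simp add: seq_span_def)
qed

lemma seq_span_insert:
  assumes "finite S" and "e \<notin> S"
  shows "seq_span (insert e S) = {\<lambda>i. w i + a * e i |w a. w \<in> seq_span S}"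
proof (intro equalityI subsetI)
  fix v assume "v \<in> seq_span (insert e S)"
  then obtain c where "v = (\<lambda>i. \<Sum>u\<in>insert e S. c u * u i)"
    unfolding seq_span_def by blast
  define w where "w = (\<lambda>i. \<Sum>u\<in>S. c u * u i)"
  have "v = (\<lambda>i. w i + c e * e i)"
    using \<open>v = _\<close> assms by (simp add: w_def add.commute)
  moreover have "w \<in> seq_span S" unfolding seq_span_def w_def by blast
  ultimately show "v \<in> {\<lambda>i. w i + a * e i |w a. w \<in> seq_span S}" by blast
next
  fix v assume "v \<in> {\<lambda>i. w i + a * e i |w a. w \<in> seq_span S}"
  then obtain c a where "v = (\<lambda>i. (\<Sum>u\<in>S. c u * u i) + a * e i)"
    unfolding seq_span_def by blast
  also have "\<dots> = (\<lambda>i. \<Sum>u\<in>insert e S. (c(e := a)) u * u i)"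
  proof -
    have "(\<Sum>u\<in>S. (c(e := a)) u * u i) = (\<Sum>u\<in>S. c u * u i)" for i
      using assms(2) by (intro sum.cong) auto
    then show ?thesis using assms by (simp add: add.commute)
  qed
  finally show "v \<in> seq_span (insert e S)" unfolding seq_span_def by blast
qed

lemma seq_span_subset_insert:
  assumes "finite S"
  shows "seq_span S \<subseteq> seq_span (insert e S)"
proof (cases "e \<in> S")
  case False
  show ?thesis
  proof
    fix w assume "w \<in> seq_span S"
    moreover have "w = (\<lambda>i. w i + 0 * e i)" by simp
    ultimately show "w \<in> seq_span (insert e S)"
      unfolding seq_span_insert[OF assms False] by blast
  qed
qed (simp add: insert_absorb)

lemma seq_span_insert_vanishing:
  assumes "finite S" and "\<And>w. w \<in> S \<Longrightarrow> w j = 0"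
    and "v \<in> seq_span (insert e S)" and "v j = 0" and "e j \<noteq> 0"
  shows "v \<in> seq_span S"
proof -
  have "e \<notin> S" using assms(2,5) by blast
  obtain w a where "w \<in> seq_span S" and v: "v = (\<lambda>i. w i + a * e i)"
    using assms(3) unfolding seq_span_insert[OF assms(1) \<open>e \<notin> S\<close>] by blast
  moreover have "w j = 0" using assms(2) \<open>w \<in> seq_span S\<close> by (rule seq_span_vanishing)
  ultimately have "a = 0" using assms(4,5) by simp
  with v \<open>w \<in> seq_span S\<close> show ?thesis by simp
qed

lemma unit_seq_notin_seq_span:
  fixes S :: "(nat \<Rightarrow> 'a::field) set"
  assumes "\<And>v. v \<in> S \<Longrightarrow> v j = 0"
  shows "unit_seq j \<notin> seq_span S"
proof
  assume "unit_seq j \<in> seq_span S"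
  with assms have "unit_seq j j = (0::'a)" by (rule seq_span_vanishing)
  then show False by (simp add: unit_seq_def)
qed

lemma finite_seq_span:
  assumes "finite T"
  shows "finite (seq_span (T :: (nat \<Rightarrow> 'a::{field,finite}) set))"
proof -
  have "seq_span T \<subseteq> (\<lambda>c i. \<Sum>v\<in>T. c v * v i) ` (T \<rightarrow>\<^sub>E (UNIV :: 'a set))"
  proof
    fix x assume "x \<in> seq_span T"
    then obtain c where "x = (\<lambda>i. \<Sum>v\<in>T. c v * v i)" unfolding seq_span_def by blast
    then have "x = (\<lambda>i. \<Sum>v\<in>T. restrict c T v * v i)" by simp
    then show "x \<in> (\<lambda>c i. \<Sum>v\<in>T. c v * v i) ` (T \<rightarrow>\<^sub>E UNIV)"
      by (intro image_eqI[where x = "restrict c T"]) simp_all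
  qed
  moreover have "finite (T \<rightarrow>\<^sub>E (UNIV :: 'a set))" using assms by (simp add: finite_PiE)
  ultimately show ?thesis using finite_subset by blast
qed

lemma finite_fd_subspace:
  assumes "X \<in> fd_subspaces"
  shows "finite (X :: (nat \<Rightarrow> 'a::{field,finite}) set)"
  using assms finite_seq_span unfolding fd_subspaces_def by blast

lemma fd_subspace_eventually_zero:
  assumes "X \<in> fd_subspaces"
  shows "eventually (\<lambda>i. \<forall>v\<in>X. v i = 0) sequentially"
proof -
  obtain S where "finite S" "S \<subseteq> finsupp_seqs" and X: "X = seq_span S"
    using assms unfolding fd_subspaces_def by blast
  then have "\<forall>v\<in>S. eventually (\<lambda>i. v i = 0) sequentially"
    by (auto simp: finsupp_seqs_def eventually_cofinite simp flip: cofinite_eq_sequentially)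
  then have "eventually (\<lambda>i. \<forall>v\<in>S. v i = 0) sequentially"
    using \<open>finite S\<close> by (rule eventually_ball_finite[rotated])
  then show ?thesis
    unfolding X by eventually_elim (auto intro: seq_span_vanishing)
qed

lemma fd_subspaces_vanish_uniformly:
  assumes "finite F" and "F \<subseteq> fd_subspaces"
  obtains N where "\<And>X v i. X \<in> F \<Longrightarrow> v \<in> X \<Longrightarrow> N \<le> i \<Longrightarrow> v i = 0"
proof -
  have "\<forall>X\<in>F. eventually (\<lambda>i. \<forall>v\<in>X. v i = 0) sequentially"
    using assms(2) fd_subspace_eventually_zero by blast
  then have "eventually (\<lambda>i. \<forall>X\<in>F. \<forall>v\<in>X. v i = 0) sequentially"
    using assms(1) by (rule eventually_ball_finite[rotated])
  then show ?thesis using that unfolding eventually_sequentially by blast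
qed

lemma mobius_uncertainty_fd_subspaces:
  "mobius_uncertainty (fd_subspaces :: (nat \<Rightarrow> 'a::{field,finite}) set set) (\<subseteq>)"
proof (rule mobius_uncertaintyI)
  fix F :: "(nat \<Rightarrow> 'a) set set"
  assume F: "F \<subseteq> fd_subspaces" "finite F" "F \<noteq> {}"
  obtain m where "m \<in> F" and m_minimal: "\<And>x. x \<in> F \<Longrightarrow> x \<subseteq> m \<Longrightarrow> m = x"
    using finite_has_minimal[OF F(2,3)] by blast
  obtain N where N: "\<And>X v i. X \<in> F \<Longrightarrow> v \<in> X \<Longrightarrow> N \<le> i \<Longrightarrow> v i = 0"
    using fd_subspaces_vanish_uniformly[OF F(2,1)] by blast
  obtain S where S: "finite S" "S \<subseteq> finsupp_seqs" "m = seq_span S"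
    using \<open>m \<in> F\<close> F(1) unfolding fd_subspaces_def by blast
  have S_zero: "u (N + k) = 0" if "u \<in> S" for u k
    using N[OF \<open>m \<in> F\<close>] seq_span_superset[OF S(1)] S(3) that by auto
  define h where "h k = seq_span (insert (unit_seq (N + k)) S)" for k
  have "infinite (isolating_points fd_subspaces (\<subseteq>) F m)"
  proof (rule infinite_isolating_pointsI[where h = h])
    show "inj h"
    proof (rule injI, rule ccontr)
      fix a b assume "h a = h b" "a \<noteq> b"
      have "unit_seq (N + a) \<in> h a"
        unfolding h_def using S(1) seq_span_superset[of "insert (unit_seq (N + a)) S"] by simp
      moreover have "unit_seq (N + a) \<notin> h b"
        unfolding h_def using \<open>a \<noteq> b\<close> S_zero
        by (intro unit_seq_notin_seq_span) (auto simp: unit_seq_def)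
      ultimately show False using \<open>h a = h b\<close> by simp
    qed
    show "h k \<in> fd_subspaces" for k
      using S(1,2) unit_seq_in_finsupp_seqs unfolding fd_subspaces_def h_def
      by (intro CollectI exI[where x = "insert (unit_seq (N + k)) S"]) simp
    then have "{x\<in>fd_subspaces. x \<subseteq> h k} \<subseteq> Pow (h k)" "finite (h k)" for k
      by (auto intro: finite_fd_subspace)
    then show "finite {x\<in>fd_subspaces. x \<subseteq> h k}" for k
      by (meson finite_Pow_iff finite_subset)
    show "m \<in> F" by fact
    show "m \<subseteq> h k" for k
      unfolding S(3) h_def using S(1) by (rule seq_span_subset_insert)
    show "x \<subseteq> m" if "x \<in> F" "x \<subseteq> h k" for x k
    proof
      fix v assume "v \<in> x"
      then have "v \<in> seq_span (insert (unit_seq (N + k)) S)" "v (N + k) = 0"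
        using that N[OF that(1)] by (auto simp: h_def)
      with S(1) S_zero[of _ k] show "v \<in> m" unfolding S(3)
        by (rule seq_span_insert_vanishing) (auto simp: unit_seq_def)
    qed
    show "x = m" if "x \<in> F" "x \<subseteq> m" for x
      using that m_minimal by blast
  qed
  with \<open>m \<in> F\<close> show "\<exists>m\<in>F. infinite (isolating_points fd_subspaces (\<subseteq>) F m)"
    by blast
qed

theorem corollary1p3:
  shows "mobius_uncertainty {n::nat. n > 0} (dvd) \<and>
         mobius_uncertainty {A :: nat set. finite A \<and> A \<subseteq> {0<..}} (\<subseteq>) \<and>
         mobius_uncertainty (fd_subspaces :: (nat \<Rightarrow> 'a::{field,finite}) set set) (\<subseteq>)"
  using mobius_uncertainty_dvd mobius_uncertainty_finite_subsets mobius_uncertainty_fd_subspaces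
  by blast

end
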